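(* Let $\mu$ be a Borel probability measure on $\mathbb{C}$ with compact support, and let $E=\{z\in\widehat{\mathbb{C}}:T_{\{\infty\},\mu}(z)=1\}$. If $z\in E$ and $k\in\mathbb{N}$, then $f^{(k)}_\omega(z)\in E$ for $\mathbb{P}_\mu$-almost every $\omega\in\Omega_\mu$.
   Context: $f_c(z)=z^2+c$, extended to $\widehat{\mathbb{C}}$ by $f_c(\infty)=\infty$. $\mathbb{P}_\mu$ is the infinite product of $\mu$ on $\Omega_\mu=\prod_{n\ge1}\operatorname{supp}\mu$. For $\omega=(c_n)$, $f^{(n)}_\omega=f_{c_n}\circ\cdots\circ f_{c_1}$, and $T_{\{\infty\},\mu}(z)=\mathbb{P}_\mu(\{\omega: f^{(n)}_\omega(z)\to\infty \text{ as } n\to\infty\})$. *)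

theory Defs
  imports "HOL-Probability.Probability"
begin

text \<open>The Riemann sphere is modelled as \<open>complex option\<close>, with \<open>None\<close> the point at infinity.\<close>

definition measure_support :: "complex measure \<Rightarrow> complex set" where
  "measure_support M = {z. \<forall>e>0. emeasure M (ball z e) > 0}"

fun quad_map :: "complex \<Rightarrow> complex option \<Rightarrow> complex option" where
  "quad_map c None = None"
| "quad_map c (Some z) = Some (z\<^sup>2 + c)"

text \<open>\<open>f^{(n)}_\<omega> = f_{c_n} \<circ> \<dots> \<circ> f_{c_1}\<close>; the sequence \<open>\<omega>\<close> is indexed from 0,
  so \<open>\<omega> 0 = c_1\<close>.\<close>
fun iter_comp :: "(nat \<Rightarrow> complex) \<Rightarrow> nat \<Rightarrow> complex option \<Rightarrow> complex option" where
  "iter_comp \<omega> 0 z = z"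
| "iter_comp \<omega> (Suc n) z = quad_map (\<omega> n) (iter_comp \<omega> n z)"

definition tends_to_infty :: "(nat \<Rightarrow> complex option) \<Rightarrow> bool" where
  "tends_to_infty s \<longleftrightarrow>
     (\<forall>R::real. eventually (\<lambda>n. case s n of None \<Rightarrow> True | Some w \<Rightarrow> R < norm w) sequentially)"

definition P_mu :: "complex measure \<Rightarrow> (nat \<Rightarrow> complex) measure" where
  "P_mu M = PiM UNIV (\<lambda>_. restrict_space M (measure_support M))"

definition T_infty :: "complex measure \<Rightarrow> complex option \<Rightarrow> real" where
  "T_infty M z = measure (P_mu M)
     {\<omega> \<in> space (P_mu M). tends_to_infty (\<lambda>n. iter_comp \<omega> n z)}"

end

theory Submission
  imports Defs
begin

text \<open>Split \<open>\<omega> = (c, \<eta>)\<close> into its first parameter and the rest. Under this splitting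
  \<open>P_mu M\<close> is the product of the restricted \<open>\<mu>\<close> with \<open>P_mu M\<close> itself, and the orbit of \<open>z\<close>
  along \<open>\<omega>\<close> escapes iff the orbit of \<open>f_c(z)\<close> along \<open>\<eta>\<close> does. So if escape from \<open>z\<close> is
  almost sure, then by Fubini escape from \<open>f_c(z)\<close> is almost sure for \<open>\<mu>\<close>-almost every \<open>c\<close>,
  and induction on \<open>k\<close> gives the claim.\<close>

lemma measure_support_closed:
  fixes M :: "complex measure"
  assumes "sets M = sets borel"
  shows "closed (measure_support M)"
proof -
  have "open (- measure_support M)"
  proof (rule openI)
    fix x assume "x \<in> - measure_support M"
    then obtain e where "e > 0" and null: "emeasure M (ball x e) = 0"
      by (auto simp: measure_support_def not_less)
    have "u \<in> - measure_support M" if "u \<in> ball x e" for u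
    proof -
      have "ball u (e - dist x u) \<subseteq> ball x e"
        by (auto simp: mem_ball) metric
      then have "emeasure M (ball u (e - dist x u)) = 0"
        using null assms emeasure_mono[of "ball u (e - dist x u)" "ball x e" M] by simp
      moreover have "e - dist x u > 0"
        using that by simp
      ultimately show ?thesis
        unfolding measure_support_def by (auto simp: not_less intro!: exI[of _ "e - dist x u"])
    qed
    then show "\<exists>e>0. ball x e \<subseteq> - measure_support M"
      using \<open>e > 0\<close> by blast
  qed
  then show ?thesis by (simp add: closed_def)
qed

lemma AE_in_measure_support:
  fixes M :: "complex measure"
  assumes "sets M = sets borel"
  shows "AE x in M. x \<in> measure_support M"
proof -
  let ?F = "{ball z e |z e. emeasure M (ball z e) = 0}"
  obtain F' where F': "F' \<subseteq> ?F" "countable F'" "\<Union>F' = \<Union>?F"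
    using Lindelof_openin[of ?F UNIV] by auto
  have "- measure_support M \<subseteq> \<Union>?F"
    by (force simp: measure_support_def not_less)
  moreover have "AE x in M. x \<notin> \<Union>F'"
    using F'(1,2) assms by (auto simp: AE_ball_countable null_sets_def intro!: AE_not_in)
  ultimately show ?thesis
    using F'(3) by (elim eventually_mono) blast
qed

lemma (in sequence_space) AE_iff_AE_case_nat:
  assumes "Measurable.pred S P"
  shows "(AE \<omega> in S. P \<omega>) \<longleftrightarrow> (AE c in M. AE \<eta> in S. P (case_nat c \<eta>))"
proof -
  interpret pair_sigma_finite M S ..
  have case_nat_measurable: "(\<lambda>(c, \<eta>). case_nat c \<eta>) \<in> measurable (M \<Otimes>\<^sub>M S) S"
    by measurable
  have "(AE \<omega> in S. P \<omega>) \<longleftrightarrow> (AE \<omega> in distr (M \<Otimes>\<^sub>M S) S (\<lambda>(c, \<eta>). case_nat c \<eta>). P \<omega>)"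
    by (simp only: PiM_iter)
  also have "\<dots> \<longleftrightarrow> (AE x in M \<Otimes>\<^sub>M S. P (case_prod case_nat x))"
    using assms by (intro AE_distr_iff[OF case_nat_measurable]) (simp add: pred_def)
  also have "\<dots> \<longleftrightarrow> (AE c in M. AE \<eta> in S. P (case_nat c \<eta>))"
    using measurable_compose[OF case_nat_measurable assms]
    by (simp only: split_beta') (intro AE_pair_iff[symmetric], simp add: pred_def split_beta')
  finally show ?thesis .
qed

fun quad_orbit :: "(nat \<Rightarrow> complex) \<Rightarrow> nat \<Rightarrow> complex \<Rightarrow> complex" where
  "quad_orbit \<omega> 0 z = z"
| "quad_orbit \<omega> (Suc n) z = (quad_orbit \<omega> n z)\<^sup>2 + \<omega> n"

lemma iter_comp_Some: "iter_comp \<omega> n (Some z) = Some (quad_orbit \<omega> n z)"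
  by (induction n) auto

lemma iter_comp_None: "iter_comp \<omega> n None = None"
  by (induction n) auto

lemma iter_comp_case_nat:
  "iter_comp (case_nat c \<eta>) (Suc n) w = iter_comp \<eta> n (quad_map c w)"
  by (induction n) auto

lemma tends_to_infty_Suc: "tends_to_infty (\<lambda>n. s (Suc n)) \<longleftrightarrow> tends_to_infty s"
  unfolding tends_to_infty_def
  by (simp only: eventually_sequentially_Suc[where
        P = "\<lambda>n. case s n of None \<Rightarrow> True | Some w \<Rightarrow> R < norm w" for R])

lemma tends_to_infty_iter_comp_case_nat:
  "tends_to_infty (\<lambda>n. iter_comp (case_nat c \<eta>) n w) \<longleftrightarrow>
     tends_to_infty (\<lambda>n. iter_comp \<eta> n (quad_map c w))"
  by (subst tends_to_infty_Suc[symmetric]) (simp only: iter_comp_case_nat)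

lemma measurable_tends_to_infty_Some[measurable]:
  assumes [measurable]: "\<And>n. f n \<in> borel_measurable M"
  shows "Measurable.pred M (\<lambda>x. tends_to_infty (\<lambda>n. Some (f n x)))"
proof -
  txt \<open>Natural bounds suffice, which makes the event a countable combination.\<close>
  have "tends_to_infty (\<lambda>n. Some (g n)) \<longleftrightarrow>
          (\<forall>R::nat. \<exists>N. \<forall>n\<ge>N. real R < norm (g n))" for g :: "nat \<Rightarrow> complex"
  proof
    assume "tends_to_infty (\<lambda>n. Some (g n))"
    then show "\<forall>R::nat. \<exists>N. \<forall>n\<ge>N. real R < norm (g n)"
      unfolding tends_to_infty_def eventually_sequentially by auto
  next
    assume nat_bound: "\<forall>R::nat. \<exists>N. \<forall>n\<ge>N. real R < norm (g n)"
    show "tends_to_infty (\<lambda>n. Some (g n))"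
      unfolding tends_to_infty_def eventually_sequentially
    proof
      fix R :: real
      obtain R' :: nat where "R \<le> real R'"
        using real_arch_simple by blast
      moreover obtain N where "\<forall>n\<ge>N. real R' < norm (g n)"
        using nat_bound by blast
      ultimately show "\<exists>N. \<forall>n\<ge>N. case Some (g n) of None \<Rightarrow> True | Some w \<Rightarrow> R < norm w"
        by (auto intro: order.strict_trans1)
    qed
  qed
  then show ?thesis
    by simp
qed

locale random_quadratic_iteration =
  fixes M :: "complex measure"
  assumes prob_space_M: "prob_space M" and sets_M: "sets M = sets borel"
begin

abbreviation "M_supp \<equiv> restrict_space M (measure_support M)"

lemma measure_support_sets: "measure_support M \<in> sets M"
  using measure_support_closed[OF sets_M] sets_M by simp

lemma prob_space_M_supp: "prob_space M_supp"
proof (rule prob_space_restrict_space[OF measure_support_sets])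
  show "emeasure M (measure_support M) = 1"
    using prob_space.emeasure_eq_1_AE[OF prob_space_M measure_support_sets
        AE_in_measure_support[OF sets_M]] .
qed

sublocale sequence_space M_supp
  by (simp add: sequence_space_def product_prob_space_def product_sigma_finite_def
      product_prob_space_axioms_def prob_space_M_supp prob_space_imp_sigma_finite)

lemma P_mu_eq: "P_mu M = S"
  by (simp add: P_mu_def)

lemma measurable_coordinate[measurable]: "(\<lambda>\<omega>. \<omega> n) \<in> borel_measurable S"
proof -
  have "(\<lambda>c. c) \<in> borel_measurable M_supp"
    by (rule measurable_restrict_space1) (rule measurable_ident_sets[OF sets_M])
  then show ?thesis
    by measurable
qed

lemma measurable_quad_orbit[measurable]:
  "(\<lambda>\<omega>. quad_orbit \<omega> n z) \<in> borel_measurable S"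
  by (induction n) auto

lemma measurable_quad_orbit_pair[measurable]:
  "(\<lambda>x. quad_orbit (snd x) n (fst x)) \<in> borel_measurable (borel \<Otimes>\<^sub>M S)"
  by (induction n) auto

lemma measurable_T_infty_Some[measurable]: "(\<lambda>z. T_infty M (Some z)) \<in> borel_measurable borel"
proof -
  let ?E = "{x \<in> space (borel \<Otimes>\<^sub>M S). tends_to_infty (\<lambda>n. Some (quad_orbit (snd x) n (fst x)))}"
  have "?E \<in> sets (borel \<Otimes>\<^sub>M S)"
    by measurable
  then have "(\<lambda>z. emeasure S (Pair z -` ?E)) \<in> borel_measurable borel"
    by (rule measurable_emeasure_Pair)
  moreover have "T_infty M (Some z) = enn2real (emeasure S (Pair z -` ?E))" for z
    by (simp add: T_infty_def P_mu_def measure_def iter_comp_Some space_pair_measure)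
  ultimately show ?thesis
    by simp
qed

lemma pred_tends_to_infty_iter_comp[measurable]:
  "Measurable.pred S (\<lambda>\<omega>. tends_to_infty (\<lambda>n. iter_comp \<omega> n w))"
proof (cases w)
  case None
  then show ?thesis
    by (simp add: iter_comp_None tends_to_infty_def)
next
  case (Some z)
  then show ?thesis
    by (simp add: iter_comp_Some)
qed

lemma pred_T_infty_iter_comp_eq_1[measurable]:
  "Measurable.pred S (\<lambda>\<omega>. T_infty M (iter_comp \<omega> k w) = 1)"
proof (cases w)
  case None
  then show ?thesis
    by (simp add: iter_comp_None)
next
  case (Some z)
  then show ?thesis
    by (simp add: iter_comp_Some)
qed

lemma T_infty_eq_1_iff_AE:
  "T_infty M w = 1 \<longleftrightarrow> (AE \<omega> in S. tends_to_infty (\<lambda>n. iter_comp \<omega> n w))"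
  unfolding T_infty_def P_mu_eq
  by (rule prob_Collect_eq_1) measurable

lemma AE_T_infty_quad_map_eq_1:
  assumes "T_infty M w = 1"
  shows "AE c in M_supp. T_infty M (quad_map c w) = 1"
proof -
  have "AE \<omega> in S. tends_to_infty (\<lambda>n. iter_comp \<omega> n w)"
    using assms T_infty_eq_1_iff_AE by blast
  then have "AE c in M_supp. AE \<eta> in S. tends_to_infty (\<lambda>n. iter_comp (case_nat c \<eta>) n w)"
    using AE_iff_AE_case_nat[OF pred_tends_to_infty_iter_comp] by blast
  then have "AE c in M_supp. AE \<eta> in S. tends_to_infty (\<lambda>n. iter_comp \<eta> n (quad_map c w))"
    by (simp only: tends_to_infty_iter_comp_case_nat)
  then show ?thesis
    by (simp only: T_infty_eq_1_iff_AE)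
qed

lemma AE_T_infty_iter_comp_eq_1:
  assumes "T_infty M w = 1"
  shows "AE \<omega> in S. T_infty M (iter_comp \<omega> k w) = 1"
  using assms
proof (induction k arbitrary: w)
  case 0
  then show ?case
    by simp
next
  case (Suc k)
  have "AE c in M_supp. AE \<eta> in S. T_infty M (iter_comp \<eta> k (quad_map c w)) = 1"
    using AE_T_infty_quad_map_eq_1[OF Suc.prems] by (auto elim: eventually_mono intro: Suc.IH)
  then have "AE c in M_supp. AE \<eta> in S. T_infty M (iter_comp (case_nat c \<eta>) (Suc k) w) = 1"
    by (simp only: iter_comp_case_nat)
  then show ?case
    using AE_iff_AE_case_nat[OF pred_T_infty_iter_comp_eq_1] by blast
qed

end

theorem lemma3p6:
  fixes M :: "complex measure" and z :: "complex option" and k :: nat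
  assumes "prob_space M"
    and "sets M = sets borel"
    and "compact (measure_support M)"
    and "z \<in> {w. T_infty M w = 1}"
  shows "AE \<omega> in P_mu M. iter_comp \<omega> k z \<in> {w. T_infty M w = 1}"
proof -
  interpret random_quadratic_iteration M
    using assms(1,2) by (rule random_quadratic_iteration.intro)
  have "T_infty M z = 1"
    using assms(4) by simp
  then have "AE \<omega> in S. T_infty M (iter_comp \<omega> k z) = 1"
    by (rule AE_T_infty_iter_comp_eq_1)
  then show ?thesis
    unfolding P_mu_eq mem_Collect_eq .
qed

end
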